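(* Let $\mu$ be a distribution on $\{0,1\}^{\mathbb{N}}$ and let $X=(X_i)_{i\in\mathbb{N}}\sim\mu$ be defined on a probability space $(\Omega,\mathcal{F},\mathbb{P})$. Then $\mu$ satisfies condition (SC) if and only if it satisfies condition (SC'), where: (SC): $(\mathbb{N},\xi)$ is totally bounded and there exists $K\ge1$ such that for every $\varepsilon>0$ there exist events $(E_k)_{k\in\mathbb{N}}$ in $\mathcal{F}$ and a finite set $J\subset\mathbb{N}$ with (1) $\mathbb{P}(E_k)\le\varepsilon$ for all $k$; (2) $\sup_{k}\frac{\log(k+1)}{\log(1/\mathbb{P}(E_k))}<\infty$; (3) for every $i\in\mathbb{N}$ there exist $j\in J$ and $\mathcal{K}\subset\mathbb{N}$ with $|\mathcal{K}|\le K$ and $\{X_i\neq X_j\}\subset\bigcup_{k\in\mathcal{K}}E_k$. (SC'): $(\mathbb{N},\xi)$ is totally bounded and there exists $K\ge1$ such that for every $\varepsilon>0$ there exist events $(E_k)_{k\in\mathbb{N}}$ in $\mathcal{F}$ and a finite sequence of random variables $(Z_j)_{j\in[J]}$ on $(\Omega,\mathcal{F},\mathbb{P})$ with (1) $\mathbb{P}(E_k)\le\varepsilon$ for all $k$; (2) $\sup_{k}\frac{\log(k+1)}{\log(1/\mathbb{P}(E_k))}<\infty$; (3) for every $i\in\mathbb{N}$ there exist $j\in[J]$ and $\mathcal{K}\subset\mathbb{N}$ with $|\mathcal{K}|\le K$ and $\{X_i\neq Z_j\}\subset\bigcup_{k\in\mathcal{K}}E_k$.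
   Context: $\xi(i,j):=\mathbb{P}(X_i\neq X_j)$; $(\mathbb{N},\xi)$ is totally bounded if for every $\varepsilon>0$ there is a finite $S\subset\mathbb{N}$ such that every $i$ has $s\in S$ with $\xi(i,s)\le\varepsilon$. $[J]=\{1,\dots,J\}$; $\log(1/0)=\infty$. *)

theory Defs
  imports "HOL-Probability.Probability"
begin

definition xi :: "'w measure \<Rightarrow> (nat \<Rightarrow> 'w \<Rightarrow> bool) \<Rightarrow> nat \<Rightarrow> nat \<Rightarrow> real" where
  "xi M X i j = measure M {\<omega> \<in> space M. X i \<omega> \<noteq> X j \<omega>}"

definition xi_totally_bounded :: "'w measure \<Rightarrow> (nat \<Rightarrow> 'w \<Rightarrow> bool) \<Rightarrow> bool" where
  "xi_totally_bounded M X \<longleftrightarrow>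
     (\<forall>\<epsilon>>0. \<exists>S. finite S \<and> (\<forall>i. \<exists>s\<in>S. xi M X i s \<le> \<epsilon>))"

text \<open>sup_k log(k+1)/log(1/P(E_k)) < infinity, with log(1/0) = infinity
  (so indices with P(E_k) = 0 contribute 0).\<close>
definition log_sup_finite :: "'w measure \<Rightarrow> (nat \<Rightarrow> 'w set) \<Rightarrow> bool" where
  "log_sup_finite M E \<longleftrightarrow>
     (\<exists>C::real. \<forall>k. measure M (E k) > 0 \<longrightarrow>
        ln (real k + 1) \<le> C * ln (1 / measure M (E k)))"

definition SC :: "'w measure \<Rightarrow> (nat \<Rightarrow> 'w \<Rightarrow> bool) \<Rightarrow> bool" where
  "SC M X \<longleftrightarrow> xi_totally_bounded M X \<and>
     (\<exists>K::nat. K \<ge> 1 \<and> (\<forall>\<epsilon>>0. \<exists>(E :: nat \<Rightarrow> 'w set) (J :: nat set).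
        (\<forall>k. E k \<in> sets M) \<and> finite J \<and>
        (\<forall>k. measure M (E k) \<le> \<epsilon>) \<and>
        log_sup_finite M E \<and>
        (\<forall>i. \<exists>j\<in>J. \<exists>\<K>. finite \<K> \<and> card \<K> \<le> K \<and>
            {\<omega> \<in> space M. X i \<omega> \<noteq> X j \<omega>} \<subseteq> (\<Union>k\<in>\<K>. E k))))"

definition SC' :: "'w measure \<Rightarrow> (nat \<Rightarrow> 'w \<Rightarrow> bool) \<Rightarrow> bool" where
  "SC' M X \<longleftrightarrow> xi_totally_bounded M X \<and>
     (\<exists>K::nat. K \<ge> 1 \<and> (\<forall>\<epsilon>>0. \<exists>(E :: nat \<Rightarrow> 'w set) (J :: nat) (Z :: nat \<Rightarrow> 'w \<Rightarrow> bool).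
        (\<forall>k. E k \<in> sets M) \<and>
        (\<forall>j\<in>{1..J}. Z j \<in> measurable M (count_space UNIV)) \<and>
        (\<forall>k. measure M (E k) \<le> \<epsilon>) \<and>
        log_sup_finite M E \<and>
        (\<forall>i. \<exists>j\<in>{1..J}. \<exists>\<K>. finite \<K> \<and> card \<K> \<le> K \<and>
            {\<omega> \<in> space M. X i \<omega> \<noteq> Z j \<omega>} \<subseteq> (\<Union>k\<in>\<K>. E k))))"

end

theory Submission
  imports Defs
begin

text \<open>Both conditions say that every \<open>X\<^sub>i\<close> agrees with one of finitely many centres outside
  a union of at most \<open>K\<close> of the events \<open>E\<^sub>k\<close>. The centres \<open>X\<^sub>j\<close>, \<open>j \<in> J\<close>, of (SC) are
  random variables, so (SC) gives (SC') after enumerating \<open>J\<close>. Conversely, for each centre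
  \<open>Z\<^sub>j\<close> pick one \<open>X\<^sub>i\<^sub>j\<close> close to it (if there is any); since
  \<open>{X\<^sub>i \<noteq> X\<^sub>i\<^sub>j} \<subseteq> {X\<^sub>i \<noteq> Z\<^sub>j} \<union> {X\<^sub>i\<^sub>j \<noteq> Z\<^sub>j}\<close>, these indices form a net for (SC) with
  \<open>2K\<close> in place of \<open>K\<close>.\<close>

definition close_within :: "'w measure \<Rightarrow> (nat \<Rightarrow> 'w set) \<Rightarrow> nat \<Rightarrow> ('w \<Rightarrow> 'b) \<Rightarrow> ('w \<Rightarrow> 'b) \<Rightarrow> bool"
  where "close_within M E K f g \<longleftrightarrow>
    (\<exists>\<K>. finite \<K> \<and> card \<K> \<le> K \<and> {\<omega> \<in> space M. f \<omega> \<noteq> g \<omega>} \<subseteq> (\<Union>k\<in>\<K>. E k))"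

lemma close_within_sym:
  assumes "close_within M E K f g"
  shows "close_within M E K g f"
proof -
  have "{\<omega> \<in> space M. g \<omega> \<noteq> f \<omega>} = {\<omega> \<in> space M. f \<omega> \<noteq> g \<omega>}"
    by auto
  with assms show ?thesis
    unfolding close_within_def by simp
qed

lemma close_within_trans:
  assumes "close_within M E K f g" and "close_within M E L g h"
  shows "close_within M E (K + L) f h"
proof -
  obtain \<K> where \<K>: "finite \<K>" "card \<K> \<le> K" "{\<omega> \<in> space M. f \<omega> \<noteq> g \<omega>} \<subseteq> (\<Union>k\<in>\<K>. E k)"
    using assms(1) unfolding close_within_def by blast
  obtain \<L> where \<L>: "finite \<L>" "card \<L> \<le> L" "{\<omega> \<in> space M. g \<omega> \<noteq> h \<omega>} \<subseteq> (\<Union>k\<in>\<L>. E k)"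
    using assms(2) unfolding close_within_def by blast
  have "{\<omega> \<in> space M. f \<omega> \<noteq> h \<omega>} \<subseteq>
      {\<omega> \<in> space M. f \<omega> \<noteq> g \<omega>} \<union> {\<omega> \<in> space M. g \<omega> \<noteq> h \<omega>}"
    by auto
  also have "\<dots> \<subseteq> (\<Union>k\<in>\<K> \<union> \<L>. E k)"
    using \<K>(3) \<L>(3) by auto
  finally have cover: "{\<omega> \<in> space M. f \<omega> \<noteq> h \<omega>} \<subseteq> (\<Union>k\<in>\<K> \<union> \<L>. E k)" .
  have "card (\<K> \<union> \<L>) \<le> K + L"
    using card_Un_le[of \<K> \<L>] \<K>(2) \<L>(2) by linarith
  then show ?thesis
    unfolding close_within_def using \<K>(1) \<L>(1) cover by blast
qed

lemma net_of_indices_from_centres: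
  assumes "finite C" and "\<forall>i. \<exists>j\<in>C. close_within M E K (X i) (Z j)"
  obtains J where "finite J" and "\<forall>i. \<exists>j\<in>J. close_within M E (2 * K) (X i) (X j)"
proof
  define rep where "rep j = (SOME i. close_within M E K (X i) (Z j))" for j
  show "finite (rep ` C)"
    using assms(1) by simp
  show "\<forall>i. \<exists>j\<in>rep ` C. close_within M E (2 * K) (X i) (X j)"
  proof
    fix i
    obtain j where "j \<in> C" and i_close: "close_within M E K (X i) (Z j)"
      using assms(2) by blast
    from i_close have rep_close: "close_within M E K (X (rep j)) (Z j)"
      unfolding rep_def by (rule someI)
    have "close_within M E (2 * K) (X i) (X (rep j))"
      using close_within_trans[OF i_close close_within_sym[OF rep_close]] by (simp add: mult_2)
    with \<open>j \<in> C\<close> show "\<exists>j\<in>rep ` C. close_within M E (2 * K) (X i) (X j)"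
      by blast
  qed
qed

lemma enumerate_index_net:
  assumes "finite J" and "\<forall>i. \<exists>j\<in>J. close_within M E K (X i) (X j)"
  obtains n :: nat and g :: "nat \<Rightarrow> nat"
  where "\<forall>i. \<exists>j\<in>{1..n}. close_within M E K (X i) (X (g j))"
proof -
  obtain g where "bij_betw g {1..card J} J"
    using ex_bij_betw_nat_finite_1[OF assms(1)] by blast
  then have J_covered: "J \<subseteq> g ` {1..card J}"
    by (simp add: bij_betw_def)
  have "\<exists>j\<in>{1..card J}. close_within M E K (X i) (X (g j))" for i
  proof -
    obtain j where "j \<in> J" and close: "close_within M E K (X i) (X j)"
      using assms(2) by blast
    with J_covered obtain j' where "j' \<in> {1..card J}" and "j = g j'"
      by blast
    with close show ?thesis
      by blast
  qed
  then show ?thesis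
    using that[of "card J" g] by blast
qed

lemma SC_iff_close_within:
  "SC M X \<longleftrightarrow> xi_totally_bounded M X \<and>
     (\<exists>K\<ge>1. \<forall>\<epsilon>>0. \<exists>E J. (\<forall>k. E k \<in> sets M) \<and> finite J \<and>
        (\<forall>k. measure M (E k) \<le> \<epsilon>) \<and> log_sup_finite M E \<and>
        (\<forall>i. \<exists>j\<in>J. close_within M E K (X i) (X j)))"
  unfolding SC_def close_within_def by (rule refl)

lemma SC'_iff_close_within:
  "SC' M X \<longleftrightarrow> xi_totally_bounded M X \<and>
     (\<exists>K\<ge>1. \<forall>\<epsilon>>0. \<exists>E (J :: nat) Z. (\<forall>k. E k \<in> sets M) \<and>
        (\<forall>j\<in>{1..J}. Z j \<in> measurable M (count_space UNIV)) \<and>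
        (\<forall>k. measure M (E k) \<le> \<epsilon>) \<and> log_sup_finite M E \<and>
        (\<forall>i. \<exists>j\<in>{1..J}. close_within M E K (X i) (Z j)))"
  unfolding SC'_def close_within_def by (rule refl)

lemma SC_imp_SC':
  assumes "SC M X" and X_meas: "\<And>i. X i \<in> measurable M (count_space UNIV)"
  shows "SC' M X"
proof -
  obtain K where tb: "xi_totally_bounded M X" and "K \<ge> 1" and index_nets:
    "\<forall>\<epsilon>>0. \<exists>E J. (\<forall>k. E k \<in> sets M) \<and> finite J \<and>
        (\<forall>k. measure M (E k) \<le> \<epsilon>) \<and> log_sup_finite M E \<and>
        (\<forall>i. \<exists>j\<in>J. close_within M E K (X i) (X j))"
    using assms(1) unfolding SC_iff_close_within by (elim conjE exE) (rule that)
  have centre_nets: "\<exists>E (n :: nat) Z. (\<forall>k. E k \<in> sets M) \<and>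
      (\<forall>j\<in>{1..n}. Z j \<in> measurable M (count_space UNIV)) \<and>
      (\<forall>k. measure M (E k) \<le> \<epsilon>) \<and> log_sup_finite M E \<and>
      (\<forall>i. \<exists>j\<in>{1..n}. close_within M E K (X i) (Z j))"
    if "\<epsilon> > 0" for \<epsilon>
  proof -
    obtain E J where E_sets: "\<forall>k. E k \<in> sets M" and "finite J"
      and E_small: "\<forall>k. measure M (E k) \<le> \<epsilon>" and E_log: "log_sup_finite M E"
      and J_net: "\<forall>i. \<exists>j\<in>J. close_within M E K (X i) (X j)"
      using index_nets[rule_format, OF \<open>\<epsilon> > 0\<close>] by blast
    obtain n :: nat and g where g_net: "\<forall>i. \<exists>j\<in>{1..n}. close_within M E K (X i) (X (g j))"
      using enumerate_index_net[OF \<open>finite J\<close> J_net] .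
    show ?thesis
      by (intro exI[of _ E] exI[of _ n] exI[of _ "\<lambda>j. X (g j)"] conjI ballI
          E_sets E_small E_log g_net X_meas)
  qed
  show ?thesis
    unfolding SC'_iff_close_within
    by (intro conjI tb exI[of _ K] \<open>K \<ge> 1\<close> allI impI centre_nets)
qed

lemma SC'_imp_SC:
  assumes "SC' M X"
  shows "SC M X"
proof -
  obtain K where tb: "xi_totally_bounded M X" and "K \<ge> 1" and centre_nets:
    "\<forall>\<epsilon>>0. \<exists>E (n :: nat) Z. (\<forall>k. E k \<in> sets M) \<and>
        (\<forall>j\<in>{1..n}. Z j \<in> measurable M (count_space UNIV)) \<and>
        (\<forall>k. measure M (E k) \<le> \<epsilon>) \<and> log_sup_finite M E \<and>
        (\<forall>i. \<exists>j\<in>{1..n}. close_within M E K (X i) (Z j))"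
    using assms unfolding SC'_iff_close_within by (elim conjE exE) (rule that)
  have index_nets: "\<exists>E J. (\<forall>k. E k \<in> sets M) \<and> finite J \<and>
      (\<forall>k. measure M (E k) \<le> \<epsilon>) \<and> log_sup_finite M E \<and>
      (\<forall>i. \<exists>j\<in>J. close_within M E (2 * K) (X i) (X j))"
    if "\<epsilon> > 0" for \<epsilon>
  proof -
    obtain E and n :: nat and Z where E_sets: "\<forall>k. E k \<in> sets M"
      and E_small: "\<forall>k. measure M (E k) \<le> \<epsilon>" and E_log: "log_sup_finite M E"
      and Z_net: "\<forall>i. \<exists>j\<in>{1..n}. close_within M E K (X i) (Z j)"
      using centre_nets[rule_format, OF \<open>\<epsilon> > 0\<close>] by blast
    obtain J where "finite J" and J_net: "\<forall>i. \<exists>j\<in>J. close_within M E (2 * K) (X i) (X j)"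
      using net_of_indices_from_centres[OF finite_atLeastAtMost Z_net] .
    show ?thesis
      by (intro exI[of _ E] exI[of _ J] conjI E_sets \<open>finite J\<close> E_small E_log J_net)
  qed
  have "2 * K \<ge> 1"
    using \<open>K \<ge> 1\<close> by simp
  show ?thesis
    unfolding SC_iff_close_within
    by (intro conjI tb exI[of _ "2 * K"] \<open>2 * K \<ge> 1\<close> allI impI index_nets)
qed

theorem proposition20:
  fixes M :: "'w measure" and X :: "nat \<Rightarrow> 'w \<Rightarrow> bool"
  assumes "prob_space M"
    and "\<And>i. X i \<in> measurable M (count_space UNIV)"
  shows "SC M X \<longleftrightarrow> SC' M X"
proof
  show "SC' M X" if "SC M X"
    using that assms(2) by (rule SC_imp_SC')
  show "SC M X" if "SC' M X"
    using that by (rule SC'_imp_SC)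
qed

end
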